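(* Let $d$ be an integer and $x$ a real number with $0<d\leqslant x/2$. For every integer $k$ with $K_d-d<k\leqslant K_d$, $$d^2\lfloor x/k\rfloor+\frac{2dx}{\lfloor x/k\rfloor}-x^2F(x/k)=2d\sqrt{dx}+kd-\frac{k^3}{3x}+O(d^{5/2}x^{-1/2}),$$ with an absolute implied constant.
   Context: $\lfloor\cdot\rfloor$ denotes the integer part. For an integer $d\geqslant 0$ and real $x>0$, $K_d=K_d(x)=\big\lfloor \big(d+\sqrt{d^2+4dx}\,\big)/2\big\rfloor$. For real $t$, $F(t)=\sum_{n>t-1}\frac{1}{n^2(n+1)^2}$, summed over positive integers $n>t-1$. *)

theory Defs
  imports "HOL-Analysis.Analysis"
begin

definition Kd :: "int \<Rightarrow> real \<Rightarrow> int" where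
  "Kd d x = \<lfloor>(real_of_int d + sqrt ((real_of_int d)\<^sup>2 + 4 * real_of_int d * x)) / 2\<rfloor>"

definition F :: "real \<Rightarrow> real" where
  "F t = (\<Sum>\<^sub>\<infinity> n \<in> {n::nat. 0 < n \<and> real n > t - 1}. 1 / ((real n)\<^sup>2 * (real n + 1)\<^sup>2))"

end

theory Submission
  imports Defs "HOL-Real_Asymp.Real_Asymp"
begin

text \<open>Write \<open>s = \<surd>(d x)\<close>, \<open>M = \<lfloor>x / k\<rfloor>\<close> and \<open>G(y) = d\<^sup>2 y + 2 d x / y - x\<^sup>2 / (3 y\<^sup>3)\<close>; note that
  \<open>d\<^bsup>5/2\<^esup> x\<^bsup>-1/2\<^esup> = d\<^sup>3 / s\<close>. Telescoping \<open>1 / (n\<^sup>2 (n + 1)\<^sup>2)\<close> against \<open>1 / (3 n\<^sup>3)\<close> gives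
  \<open>F(x / k) = 1 / (3 M\<^sup>3) - O(M\<^sup>-\<^sup>5)\<close>, and \<open>x\<^sup>2 / M\<^sup>5 = O(d\<^sup>3 / s)\<close> since \<open>M \<asymp> s / d\<close>.
  The definition of \<open>K\<^sub>d\<close> forces \<open>|k - s| \<le> d\<close>, so \<open>G(x / k)\<close> differs from the main term
  \<open>2 d s + k d - k\<^sup>3 / (3 x)\<close> by exactly \<open>d (s - k)\<^sup>2 / k = O(d\<^sup>3 / s)\<close>. Finally
  \<open>G'(y) = (d - x / y\<^sup>2)\<^sup>2 = O(d\<^sup>4 / s\<^sup>2)\<close> between \<open>M\<close> and \<open>x / k\<close>, so replacing \<open>x / k\<close> by \<open>M\<close>
  costs another \<open>O(d\<^sup>3 / s)\<close>.\<close>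

lemma inverse_square_product_telescoping:
  fixes n :: real
  assumes "n > 0"
  shows "1 / (n\<^sup>2 * (n + 1)\<^sup>2) = (1 / (3 * n ^ 3) - 1 / (3 * (n + 1) ^ 3)) - 1 / (3 * n ^ 3 * (n + 1) ^ 3)"
  using assms by (simp add: field_simps) algebra

lemma infsum_atLeast_eq_shifted_suminf:
  fixes f :: "nat \<Rightarrow> real"
  assumes "\<And>n. 0 \<le> f n" and "(\<lambda>i. f (i + m)) sums S"
  shows "(\<Sum>\<^sub>\<infinity> n \<in> {m..}. f n) = S"
proof -
  have "bij_betw (\<lambda>i. i + m) UNIV {m..}"
    by (rule bij_betwI[where g = "\<lambda>n. n - m"]) auto
  then show ?thesis
    using infsum_reindex_bij_betw[of "\<lambda>i. i + m" UNIV "{m..}" f]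
      sums_nonneg_imp_has_sum[OF assms(2)] assms(1)
    by (simp add: o_def infsumI)
qed

lemma inverse_square_product_tail_bounds:
  fixes m :: nat
  assumes m: "m \<ge> 1"
  defines "S \<equiv> \<Sum>\<^sub>\<infinity> n \<in> {m..}. 1 / ((real n)\<^sup>2 * (real n + 1)\<^sup>2)"
  shows "0 \<le> 1 / (3 * real m ^ 3) - S" and "1 / (3 * real m ^ 3) - S \<le> 1 / (9 * real m ^ 5)"
proof -
  define f where "f = (\<lambda>n::nat. 1 / ((real n)\<^sup>2 * (real n + 1)\<^sup>2))"
  define h where "h = (\<lambda>n::nat. 1 / (3 * real n ^ 3))"
  define b where "b = (\<lambda>i. 1 / (3 * real (i + m) ^ 3 * (real (i + m) + 1) ^ 3))"
  have f_nonneg: "0 \<le> f n" for n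
    unfolding f_def by simp
  have f_eq: "f (i + m) = (h (i + m) - h (Suc (i + m))) - b i" for i
    using inverse_square_product_telescoping[of "real (i + m)"] m
    by (simp add: f_def h_def b_def add.commute)
  have "(\<lambda>i. h (i + m)) \<longlonglongrightarrow> 0"
    by (rule LIMSEQ_ignore_initial_segment) (unfold h_def, real_asymp)
  then have telescope: "(\<lambda>i. h (i + m) - h (Suc (i + m))) sums h m"
    using telescope_sums' by fastforce
  have b_nonneg: "0 \<le> b i" for i
    unfolding b_def by simp
  \<comment> \<open>The correction term is smaller than the summand by the factor \<open>3 n (n + 1) \<ge> 3 m\<^sup>2\<close>.\<close>
  have b_le: "b i \<le> f (i + m) / (3 * real m ^ 2)" for i
  proof -
    define n where "n = real (i + m)"
    have "real m ^ 2 \<le> n * (n + 1)"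
      using m by (simp add: n_def power2_eq_square mult_mono)
    then have "(1 / (n\<^sup>2 * (n + 1)\<^sup>2)) / (3 * (n * (n + 1))) \<le> (1 / (n\<^sup>2 * (n + 1)\<^sup>2)) / (3 * real m ^ 2)"
      using m by (intro divide_left_mono) (auto simp: n_def)
    moreover have "b i = (1 / (n\<^sup>2 * (n + 1)\<^sup>2)) / (3 * (n * (n + 1)))"
      unfolding b_def n_def[symmetric] by (simp add: power2_eq_square power3_eq_cube)
    ultimately show ?thesis
      by (simp add: f_def n_def)
  qed
  have "b i \<le> h (i + m) - h (Suc (i + m))" for i
    using f_eq[of i] f_nonneg[of "i + m"] by simp
  then have "summable b"
    using telescope b_nonneg by (intro summable_comparison_test'[OF sums_summable]) auto
  then have f_sums: "(\<lambda>i. f (i + m)) sums (h m - suminf b)"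
    unfolding f_eq using sums_diff[OF telescope summable_sums] by blast
  have S_eq: "S = h m - suminf b"
    using infsum_atLeast_eq_shifted_suminf[OF f_nonneg f_sums] by (simp add: S_def f_def)
  have "suminf b \<le> (\<Sum>i. f (i + m) / (3 * real m ^ 2))"
    using b_le \<open>summable b\<close> f_sums by (intro suminf_le) (auto simp: sums_iff summable_divide)
  also have "\<dots> = S / (3 * real m ^ 2)"
    using f_sums by (simp add: S_eq sums_iff suminf_divide)
  also have "\<dots> \<le> h m / (3 * real m ^ 2)"
    using \<open>summable b\<close> b_nonneg by (simp add: S_eq divide_right_mono suminf_nonneg)
  also have "\<dots> = 1 / (9 * real m ^ 5)"
    by (simp add: h_def field_simps)
  finally show "1 / (3 * real m ^ 3) - S \<le> 1 / (9 * real m ^ 5)"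
    by (simp add: S_eq h_def)
  show "0 \<le> 1 / (3 * real m ^ 3) - S"
    using \<open>summable b\<close> b_nonneg by (simp add: S_eq h_def suminf_nonneg)
qed

lemma F_eq_tail_infsum:
  assumes "t \<ge> 1"
  shows "F t = (\<Sum>\<^sub>\<infinity> n \<in> {nat \<lfloor>t\<rfloor>..}. 1 / ((real n)\<^sup>2 * (real n + 1)\<^sup>2))"
proof -
  have "{n::nat. 0 < n \<and> real n > t - 1} = {nat \<lfloor>t\<rfloor>..}"
    using assms by (auto simp: le_nat_iff floor_le_iff) linarith+
  then show ?thesis
    by (simp add: F_def)
qed

lemma Kd_bounds:
  fixes d x :: real
  assumes d: "d > 0" and x: "2 * d \<le> x"
    and K: "K = \<lfloor>(d + sqrt (d\<^sup>2 + 4 * d * x)) / 2\<rfloor>"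
  shows "K \<le> sqrt (d * x) + d" and "K > sqrt (d * x) + d / 2 - 1" and "K \<le> x"
proof -
  define q where "q = sqrt (d\<^sup>2 + 4 * d * x)"
  define s where "s = sqrt (d * x)"
  have "x > 0"
    using d x by linarith
  then have s_nonneg: "s \<ge> 0" and s_sq: "s\<^sup>2 = d * x"
    using d by (simp_all add: s_def)
  have q_nonneg: "q \<ge> 0" and q_sq: "q\<^sup>2 = d\<^sup>2 + 4 * d * x"
    using d \<open>x > 0\<close> by (simp_all add: q_def add_nonneg_nonneg)
  have "(2 * s)\<^sup>2 \<le> q\<^sup>2"
    using q_sq s_sq d by (simp add: power_mult_distrib)
  then have q_lower: "2 * s \<le> q"
    using q_nonneg by (rule power2_le_imp_le)
  have "q\<^sup>2 \<le> (d + 2 * s)\<^sup>2"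
    using q_sq s_sq d s_nonneg by (simp add: power2_sum power_mult_distrib)
  then have q_upper: "q \<le> d + 2 * s"
    using d s_nonneg by (auto intro: power2_le_imp_le)
  have "2 * d * x \<le> x * x"
    using x \<open>x > 0\<close> by (intro mult_right_mono) auto
  then have "q\<^sup>2 \<le> (2 * x - d)\<^sup>2"
    unfolding q_sq by (simp add: power2_eq_square algebra_simps)
  then have q_upper': "q \<le> 2 * x - d"
    using d x by (auto intro: power2_le_imp_le)
  have "K \<le> (d + q) / 2" and "K > (d + q) / 2 - 1"
    unfolding K q_def by linarith+
  then show "K \<le> sqrt (d * x) + d" and "K > sqrt (d * x) + d / 2 - 1" and "K \<le> x"
    using q_lower q_upper q_upper' unfolding s_def by (auto simp: field_simps)
qed

text \<open>\<open>G d x m\<close> is the left-hand side of the theorem with \<open>F (x / k)\<close> replaced by its leading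
  term \<open>1 / (3 m\<^sup>3)\<close>, where \<open>m = \<lfloor>x / k\<rfloor>\<close>.\<close>

definition G :: "real \<Rightarrow> real \<Rightarrow> real \<Rightarrow> real" where
  "G d x y = d\<^sup>2 * y + 2 * d * x / y - x\<^sup>2 / (3 * y ^ 3)"

lemma G_diff:
  assumes "m \<noteq> 0" "r \<noteq> 0"
  shows "G d x m - G d x r = (m - r) * ((d - x / (m * r))\<^sup>2 + x\<^sup>2 * (r - m)\<^sup>2 / (3 * m ^ 3 * r ^ 3))"
  using assms unfolding G_def by (simp add: field_simps) algebra

lemma G_at_x_over_k:
  assumes "k \<noteq> 0" "x \<noteq> 0" "s\<^sup>2 = d * x"
  shows "G d x (x / k) - (2 * d * s + k * d - k ^ 3 / (3 * x)) = d * (s - k)\<^sup>2 / k"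
proof -
  have "d * (s - k)\<^sup>2 / k = d * (d * x - 2 * s * k + k\<^sup>2) / k"
    using assms by (simp add: power2_diff)
  then show ?thesis
    unfolding G_def using assms by (simp add: field_simps power3_eq_cube power2_eq_square)
qed

locale near_sqrt_dx =
  fixes d x s k :: real
  assumes d_pos: "0 < d" and d_le_x: "d \<le> x"
    and s_def: "s = sqrt (d * x)"
    and k_lower: "s - d / 2 < k" and k_upper: "k \<le> s + d"
begin

lemma x_pos: "0 < x"
  using d_pos d_le_x by linarith

lemma s_pos: "0 < s" and s_squared: "s\<^sup>2 = d * x"
  using d_pos x_pos by (simp_all add: s_def)

lemma x_eq: "x = s\<^sup>2 / d"
  using s_squared d_pos by simp

lemma d_le_s: "d \<le> s"
proof -
  have "sqrt (d\<^sup>2) \<le> s"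
    unfolding s_def using d_pos d_le_x by (intro real_sqrt_le_mono) (simp add: power2_eq_square)
  then show ?thesis
    using d_pos by simp
qed

lemma k_ge_half_s: "s / 2 \<le> k" and k_le_twice_s: "k \<le> 2 * s" and k_pos: "0 < k"
  and abs_s_minus_k: "\<bar>s - k\<bar> \<le> d"
  using k_lower k_upper d_le_s s_pos d_pos by linarith+

lemma x_over_k_ge: "s / (2 * d) \<le> x / k"
proof -
  have "x / (2 * s) \<le> x / k"
    using x_pos k_pos k_le_twice_s by (intro divide_left_mono) auto
  then show ?thesis
    using s_pos d_pos by (simp add: x_eq field_simps power2_eq_square)
qed

lemma abs_d_minus_x_over_k_squared: "\<bar>d - x / ((x / k) * (x / k))\<bar> \<le> 3 * d\<^sup>2 / s"
proof -
  have "s\<^sup>2 - k\<^sup>2 = (s - k) * (s + k)"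
    by (simp add: power2_eq_square algebra_simps)
  then have "\<bar>s\<^sup>2 - k\<^sup>2\<bar> = \<bar>s - k\<bar> * (s + k)"
    using s_pos k_pos by (simp add: abs_mult)
  also have "\<dots> \<le> d * (3 * s)"
    using abs_s_minus_k k_le_twice_s s_pos k_pos d_pos by (intro mult_mono) auto
  finally have "\<bar>s\<^sup>2 - k\<^sup>2\<bar> \<le> 3 * d * s"
    by simp
  moreover have "d - x / ((x / k) * (x / k)) = d * (s\<^sup>2 - k\<^sup>2) / s\<^sup>2"
    using d_pos s_pos k_pos by (simp add: x_eq field_simps power2_eq_square)
  ultimately have "\<bar>d - x / ((x / k) * (x / k))\<bar> \<le> d * (3 * d * s) / s\<^sup>2"
    using d_pos s_pos by (simp add: abs_mult divide_right_mono mult_left_mono)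
  also have "\<dots> = 3 * d\<^sup>2 / s"
    using s_pos by (simp add: field_simps power2_eq_square)
  finally show ?thesis .
qed

lemma G_x_over_k_error:
  defines "E \<equiv> G d x (x / k) - (2 * d * s + k * d - k ^ 3 / (3 * x))"
  shows "0 \<le> E" and "E \<le> 2 * (d ^ 3 / s)"
proof -
  have E_eq: "E = d * (s - k)\<^sup>2 / k"
    unfolding E_def using k_pos x_pos s_squared by (intro G_at_x_over_k) auto
  then show "0 \<le> E"
    using d_pos k_pos by simp
  have "(s - k)\<^sup>2 \<le> d\<^sup>2"
    using abs_s_minus_k d_pos by (metis abs_le_square_iff abs_of_pos)
  then have "E \<le> d * d\<^sup>2 / k"
    unfolding E_eq using d_pos k_pos by (simp add: divide_right_mono)
  also have "\<dots> \<le> d * d\<^sup>2 / (s / 2)"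
    using d_pos k_pos k_ge_half_s s_pos by (intro divide_left_mono) auto
  also have "\<dots> = 2 * (d ^ 3 / s)"
    by (simp add: field_simps power2_eq_square power3_eq_cube)
  finally show "E \<le> 2 * (d ^ 3 / s)" .
qed

end

locale near_sqrt_dx_floor = near_sqrt_dx +
  fixes m :: real
  assumes m_ge_1: "1 \<le> m" and m_gt: "x / k - 1 < m" and m_le: "m \<le> x / k"
begin

lemma m_pos: "0 < m"
  using m_ge_1 by simp

lemma x_over_k_minus_m: "0 \<le> x / k - m" "x / k - m \<le> 1"
  using m_gt m_le by auto

lemma m_ge: "s / (4 * d) \<le> m"
proof -
  have "s / (2 * d) \<le> 2 * m"
    using x_over_k_ge m_ge_1 m_gt by linarith
  then show ?thesis
    using d_pos by (simp add: field_simps)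
qed

lemma m_times_x_over_k_ge: "s\<^sup>2 / (8 * d\<^sup>2) \<le> m * (x / k)"
proof -
  have "(s / (4 * d)) * (s / (2 * d)) \<le> m * (x / k)"
    using m_ge x_over_k_ge s_pos d_pos m_pos by (intro mult_mono) auto
  then show ?thesis
    by (simp add: field_simps power2_eq_square)
qed

lemma x_over_mr_le: "x / (m * (x / k)) \<le> 8 * d"
proof -
  have "x / (m * (x / k)) \<le> x / (s\<^sup>2 / (8 * d\<^sup>2))"
    using m_times_x_over_k_ge x_pos s_pos d_pos m_pos k_pos by (intro divide_left_mono) auto
  also have "\<dots> = 8 * d"
    using d_pos s_pos by (simp add: x_eq field_simps power2_eq_square)
  finally show ?thesis .
qed

lemma inverse_mr_le: "1 / (m * (x / k)) \<le> 8 * d\<^sup>2 / s\<^sup>2"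
proof -
  have "1 / (m * (x / k)) \<le> 1 / (s\<^sup>2 / (8 * d\<^sup>2))"
    using m_times_x_over_k_ge s_pos d_pos m_pos x_pos k_pos by (intro divide_left_mono) auto
  then show ?thesis
    by simp
qed

lemma abs_d_minus_x_over_mr: "\<bar>d - x / (m * (x / k))\<bar> \<le> 19 * d\<^sup>2 / s"
proof -
  define r where "r = x / k"
  have r_pos: "0 < r"
    using x_pos k_pos by (simp add: r_def)
  have r_minus_m: "0 \<le> r - m" "r - m \<le> 1" and r_ge: "s / (2 * d) \<le> r"
    and x_over_mr: "x / (m * r) \<le> 8 * d" and close: "\<bar>d - x / (r * r)\<bar> \<le> 3 * d\<^sup>2 / s"
    using x_over_k_minus_m x_over_k_ge x_over_mr_le abs_d_minus_x_over_k_squared by (simp_all add: r_def)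
  have "(r - m) / r \<le> 1 / r"
    using r_minus_m r_pos by (intro divide_right_mono) auto
  also have "\<dots> \<le> 1 / (s / (2 * d))"
    using r_ge s_pos d_pos r_pos by (intro divide_left_mono) auto
  finally have "(r - m) / r \<le> 2 * d / s"
    by simp
  then have "x / (m * r) * ((r - m) / r) \<le> 8 * d * (2 * d / s)"
    using x_over_mr r_minus_m x_pos m_pos r_pos d_pos by (intro mult_mono) auto
  moreover have "x / (m * r) - x / (r * r) = x / (m * r) * ((r - m) / r)"
    using m_pos r_pos by (simp add: field_simps)
  moreover have "0 \<le> x / (m * r) * ((r - m) / r)"
    using r_minus_m x_pos m_pos r_pos by simp
  moreover have "19 * d\<^sup>2 / s = 3 * d\<^sup>2 / s + 8 * d * (2 * d / s)"
    by (simp add: field_simps power2_eq_square)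
  ultimately have "\<bar>d - x / (m * r)\<bar> \<le> 19 * d\<^sup>2 / s"
    using close unfolding abs_le_iff by linarith
  then show ?thesis
    unfolding r_def .
qed

lemma square_d_minus_x_over_mr_le: "(d - x / (m * (x / k)))\<^sup>2 \<le> 361 * (d ^ 3 / s)"
proof -
  have "(d - x / (m * (x / k)))\<^sup>2 \<le> (19 * d\<^sup>2 / s)\<^sup>2"
    using abs_d_minus_x_over_mr by (simp add: power2_le_iff_abs_le d_pos s_pos)
  also have "\<dots> = 361 * (d ^ 3 / s) * (d / s)"
    by (simp add: field_simps power2_eq_square power3_eq_cube)
  also have "\<dots> \<le> 361 * (d ^ 3 / s)"
    using d_le_s d_pos s_pos by (intro mult_left_le) auto
  finally show ?thesis .
qed

lemma cubic_remainder_le: "x\<^sup>2 * (x / k - m)\<^sup>2 / (3 * m ^ 3 * (x / k) ^ 3) \<le> 171 * (d ^ 3 / s)"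
proof -
  define r where "r = x / k"
  have r_pos: "0 < r"
    using x_pos k_pos by (simp add: r_def)
  have r_minus_m: "0 \<le> r - m" "r - m \<le> 1"
    and x_over_mr: "x / (m * r) \<le> 8 * d" and inverse_mr: "1 / (m * r) \<le> 8 * d\<^sup>2 / s\<^sup>2"
    using x_over_k_minus_m x_over_mr_le inverse_mr_le by (simp_all add: r_def)
  have "x\<^sup>2 * (r - m)\<^sup>2 / (3 * m ^ 3 * r ^ 3) \<le> x\<^sup>2 / (3 * m ^ 3 * r ^ 3)"
    using r_minus_m m_pos r_pos by (intro divide_right_mono mult_left_le) (auto simp: power_le_one)
  also have "\<dots> = (x / (m * r))\<^sup>2 * (1 / (m * r)) / 3"
    by (simp add: field_simps power2_eq_square power3_eq_cube)
  also have "\<dots> \<le> (8 * d)\<^sup>2 * (8 * d\<^sup>2 / s\<^sup>2) / 3"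
    using x_over_mr inverse_mr x_pos m_pos r_pos by (intro divide_right_mono mult_mono power_mono) auto
  also have "\<dots> = (512 / 3) * (d ^ 3 / s) * (d / s)"
    by (simp add: field_simps power2_eq_square power3_eq_cube)
  also have "\<dots> \<le> (512 / 3) * (d ^ 3 / s)"
    using d_le_s d_pos s_pos by (intro mult_left_le) auto
  also have "\<dots> \<le> 171 * (d ^ 3 / s)"
    using d_pos s_pos by (intro mult_right_mono) auto
  finally show ?thesis
    by (simp add: r_def)
qed

lemma G_floor_error: "\<bar>G d x m - G d x (x / k)\<bar> \<le> 532 * (d ^ 3 / s)"
proof -
  define r where "r = x / k"
  define B where "B = (d - x / (m * r))\<^sup>2 + x\<^sup>2 * (r - m)\<^sup>2 / (3 * m ^ 3 * r ^ 3)"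
  have r_pos: "0 < r"
    using x_pos k_pos by (simp add: r_def)
  have r_minus_m: "0 \<le> r - m" "r - m \<le> 1"
    using x_over_k_minus_m by (simp_all add: r_def)
  have "B \<ge> 0"
    using m_pos r_pos by (simp add: B_def)
  have "\<bar>G d x m - G d x r\<bar> = (r - m) * B"
    using G_diff[of m r d x] m_pos r_pos r_minus_m \<open>B \<ge> 0\<close> by (simp add: B_def abs_mult)
  also have "\<dots> \<le> B"
    using r_minus_m \<open>B \<ge> 0\<close> by (simp add: mult_left_le_one_le)
  finally show ?thesis
    using square_d_minus_x_over_mr_le cubic_remainder_le by (simp add: B_def r_def)
qed

lemma tail_error: "x\<^sup>2 / (9 * m ^ 5) \<le> 114 * (d ^ 3 / s)"
proof -
  have "1 / m \<le> 1 / (s / (4 * d))"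
    using m_ge s_pos d_pos m_pos by (intro divide_left_mono) auto
  then have "1 / m \<le> 4 * d / s"
    by simp
  then have "x\<^sup>2 * (1 / m) ^ 5 / 9 \<le> x\<^sup>2 * (4 * d / s) ^ 5 / 9"
    using m_pos by (intro divide_right_mono mult_left_mono power_mono) auto
  moreover have "x\<^sup>2 / (9 * m ^ 5) = x\<^sup>2 * (1 / m) ^ 5 / 9"
    by (simp add: power_one_over)
  ultimately have "x\<^sup>2 / (9 * m ^ 5) \<le> x\<^sup>2 * (4 * d / s) ^ 5 / 9"
    by simp
  also have "\<dots> = (1024 / 9) * (d ^ 3 / s)"
    using d_pos s_pos by (simp add: x_eq field_simps power2_eq_square power3_eq_cube eval_nat_numeral)
  also have "\<dots> \<le> 114 * (d ^ 3 / s)"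
    using d_pos s_pos by (intro mult_right_mono) auto
  finally show ?thesis .
qed


lemma approximation_error:
  assumes "0 \<le> e" and "e \<le> 1 / (9 * m ^ 5)"
  shows "\<bar>G d x m + x\<^sup>2 * e - (2 * d * s + k * d - k ^ 3 / (3 * x))\<bar> \<le> 1000 * (d ^ 3 / s)"
proof -
  have "0 \<le> x\<^sup>2 * e" and "x\<^sup>2 * e \<le> x\<^sup>2 / (9 * m ^ 5)"
    using assms mult_left_mono[OF assms(2), of "x\<^sup>2"] by simp_all
  moreover have "0 \<le> d ^ 3 / s"
    using d_pos s_pos by simp
  ultimately show ?thesis
    using G_floor_error G_x_over_k_error tail_error unfolding abs_le_iff by linarith
qed

end

lemma powr_five_halves_mult_powr_minus_half:
  fixes d x :: real
  assumes "0 < d" and "0 < x"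
  shows "d powr (5 / 2) * x powr (- 1 / 2) = d ^ 3 / sqrt (d * x)"
proof -
  have "d powr (5 / 2) = d\<^sup>2 * sqrt d"
    using powr_add[of d 2 "1 / 2"] assms by (simp add: powr_half_sqrt)
  moreover have "x powr (- 1 / 2) = 1 / sqrt x"
    using assms by (simp add: powr_minus_divide powr_half_sqrt)
  moreover have "d ^ 3 = d\<^sup>2 * (sqrt d * sqrt d)"
    using assms by (simp add: power3_eq_cube power2_eq_square)
  ultimately show ?thesis
    using assms by (simp add: real_sqrt_mult field_simps)
qed

theorem proposition6:
  shows "\<exists>C::real. \<forall>(d::int) (x::real) (k::int).
     0 < d \<and> real_of_int d \<le> x / 2 \<and> Kd d x - d < k \<and> k \<le> Kd d x \<longrightarrow>
     \<bar>(real_of_int d)\<^sup>2 * real_of_int \<lfloor>x / real_of_int k\<rfloor>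
        + 2 * real_of_int d * x / real_of_int \<lfloor>x / real_of_int k\<rfloor>
        - x\<^sup>2 * F (x / real_of_int k)
      - (2 * real_of_int d * sqrt (real_of_int d * x) + real_of_int k * real_of_int d
         - (real_of_int k) ^ 3 / (3 * x))\<bar>
     \<le> C * (real_of_int d) powr (5/2) * x powr (-1/2)"
proof (intro exI[of _ 1000] allI impI, elim conjE, goal_cases)
  case (1 d x k)
  then have d: "0 < d" and x: "real_of_int d \<le> x / 2" and k: "Kd d x - d < k" "k \<le> Kd d x"
    by simp_all
  define s where "s = sqrt (d * x)"
  define M where "M = \<lfloor>x / k\<rfloor>"
  have K: "Kd d x \<le> s + d" "Kd d x > s + d / 2 - 1" "Kd d x \<le> x"
    using Kd_bounds[of d x "Kd d x"] d x by (simp_all add: Kd_def s_def)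
  have "real_of_int (Kd d x) - d + 1 \<le> k"
    using k(1) by linarith
  moreover have k_le_Kd: "real_of_int k \<le> Kd d x"
    using k(2) by linarith
  ultimately interpret near_sqrt_dx d x s k
    using d x K by unfold_locales (auto simp: s_def)
  have "1 \<le> x / k"
    using k_pos k_le_Kd K(3) by simp
  then interpret near_sqrt_dx_floor d x s k M
    unfolding M_def by unfold_locales (simp add: le_floor_iff, linarith+)
  define e where "e = 1 / (3 * real_of_int M ^ 3) - F (x / k)"
  have "F (x / k) = (\<Sum>\<^sub>\<infinity> n \<in> {nat M..}. 1 / ((real n)\<^sup>2 * (real n + 1)\<^sup>2))"
    using F_eq_tail_infsum m_ge_1 m_le by (simp add: M_def)
  then have "0 \<le> e" "e \<le> 1 / (9 * real_of_int M ^ 5)"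
    using inverse_square_product_tail_bounds[of "nat M"] m_ge_1 by (simp_all add: e_def)
  then show ?case
    using approximation_error[of e] powr_five_halves_mult_powr_minus_half[of d x] d_pos x_pos
    by (simp add: G_def e_def M_def s_def algebra_simps)
qed

end
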